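(* Let $p\in(1,2]$, $\nu\ge2$, and $a_1,\dots,a_\nu\ge0$. Then \[\Big(\sum_{i=1}^\nu a_i\Big)^p-\sum_{i=1}^\nu a_i^p\le\sum_{1\le i<j\le\nu}\big[(a_i+a_j)^p-a_i^p-a_j^p\big].\] *)

theory Defs
  imports Complex_Main
begin

end

theory Submission
  imports Defs "HOL-Analysis.Analysis"
begin

text \<open>
  Write \<open>f t = t powr p\<close>. Since \<open>f'\<close> is concave for \<open>1 < p \<le> 2\<close>, the increments of \<open>f'\<close>
  shrink as the base point grows; integrating this shows that the mixed second difference
  \<open>f (x + y + z) - f (x + y) - f (x + z) + f x\<close> is decreasing in \<open>x\<close>, hence bounded by its
  value \<open>f (y + z) - f y - f z\<close> at \<open>x = 0\<close>. Applied with \<open>y\<close> a partial sum, this bounds the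
  defect \<open>f (S + b) - f S - f b\<close> by the sum of the defects of \<open>b\<close> with the summands of \<open>S\<close>,
  and induction on the number of summands gives the theorem.
\<close>

lemma powr_concave:
  assumes "0 \<le> q" "q \<le> 1"
  shows "concave_on {0<..} (\<lambda>x::real. x powr q)"
proof (rule f''_le0_imp_concave)
  fix x :: real assume "x \<in> {0<..}"
  then show "DERIV (\<lambda>x. x powr q) x :> q * x powr (q - 1)"
    and "DERIV (\<lambda>x. q * x powr (q - 1)) x :> q * ((q - 1) * x powr (q - 2))"
    by (auto intro!: derivative_eq_intros)
  show "q * ((q - 1) * x powr (q - 2)) \<le> 0"
    using assms by (intro mult_nonneg_nonpos mult_nonpos_nonneg) auto
qed auto

lemma concave_on_increment_antimono:
  fixes u :: "real \<Rightarrow> real"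
  assumes u: "concave_on I u" and I: "s \<in> I" "t + d \<in> I" and "s \<le> t" "0 \<le> d"
  shows "u (t + d) - u t \<le> u (s + d) - u s"
proof (cases "s = t + d")
  case True
  with assms show ?thesis by simp
next
  case False
  define l where "l = (t - s) / (t + d - s)"
  have l: "0 \<le> l" "l \<le> 1" "l * (t + d - s) = t - s"
    using False assms by (auto simp: l_def field_simps)
  have t: "(1 - l) *\<^sub>R s + l *\<^sub>R (t + d) = t"
    and sd: "(1 - (1 - l)) *\<^sub>R s + (1 - l) *\<^sub>R (t + d) = s + d"
    using l(3) by (simp_all add: algebra_simps)
  show ?thesis
    using concave_onD[OF u, of l s "t + d"] concave_onD[OF u, of "1 - l" s "t + d"] l I
    unfolding t sd by (simp add: algebra_simps)
qed

lemma powr_sum3_ineq: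
  fixes p x y z :: real
  assumes p: "1 < p" "p \<le> 2" and "0 \<le> x" "0 \<le> y" "0 \<le> z"
  shows "(x + y + z) powr p + x powr p + y powr p + z powr p
         \<le> (x + y) powr p + (x + z) powr p + (y + z) powr p"
proof -
  define g where "g = (\<lambda>w. (w + y) powr p + (w + z) powr p - (w + y + z) powr p - w powr p)"
  have "\<exists>D. DERIV g w :> D \<and> 0 \<le> D" if w: "0 < w" for w
  proof -
    let ?D = "p * ((w + y) powr (p - 1) + (w + z) powr (p - 1)
                   - (w + y + z) powr (p - 1) - w powr (p - 1))"
    have "(w + y + z) powr (p - 1) - (w + y) powr (p - 1) \<le> (w + z) powr (p - 1) - w powr (p - 1)"
      using concave_on_increment_antimono[OF powr_concave[of "p - 1"], of w "w + y" z] p w assms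
      by auto
    then have "0 \<le> ?D"
      using p by simp
    moreover have "DERIV g w :> ?D"
      unfolding g_def using w assms by (auto intro!: derivative_eq_intros simp: algebra_simps)
    ultimately show ?thesis by blast
  qed
  moreover have "continuous_on {0..x} g"
    unfolding g_def using assms by (intro continuous_intros continuous_on_powr') auto
  ultimately have "g 0 \<le> g x"
    using DERIV_nonneg_imp_increasing_open[of 0 x g] \<open>0 \<le> x\<close> by simp
  then show ?thesis using p by (simp add: g_def)
qed

lemma add_defect_le_sum_defects:
  fixes f :: "real \<Rightarrow> real" and x :: "'a \<Rightarrow> real"
  assumes f0: "f 0 = 0"
    and sum3: "\<And>x y z. 0 \<le> x \<Longrightarrow> 0 \<le> y \<Longrightarrow> 0 \<le> z \<Longrightarrow>
                  f (x + y + z) + f x + f y + f z \<le> f (x + y) + f (x + z) + f (y + z)"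
    and "finite A" "\<And>i. i \<in> A \<Longrightarrow> 0 \<le> x i" "0 \<le> b"
  shows "f (sum x A + b) - f (sum x A) - f b \<le> (\<Sum>i\<in>A. f (x i + b) - f (x i) - f b)"
  using \<open>finite A\<close> assms(4)
proof (induction A rule: finite_induct)
  case empty
  then show ?case using f0 by simp
next
  case (insert k A)
  have "f (x k + sum x A + b) + f (x k) + f (sum x A) + f b
          \<le> f (x k + sum x A) + f (x k + b) + f (sum x A + b)"
    using insert.prems \<open>0 \<le> b\<close> by (intro sum3 sum_nonneg) auto
  with insert show ?case by (simp add: algebra_simps)
qed

lemma sum_defect_le_pair_defects:
  fixes f :: "real \<Rightarrow> real" and a :: "nat \<Rightarrow> real"
  assumes f0: "f 0 = 0"
    and sum3: "\<And>x y z. 0 \<le> x \<Longrightarrow> 0 \<le> y \<Longrightarrow> 0 \<le> z \<Longrightarrow>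
                  f (x + y + z) + f x + f y + f z \<le> f (x + y) + f (x + z) + f (y + z)"
    and "\<And>i. i \<in> {1..n} \<Longrightarrow> 0 \<le> a i"
  shows "f (\<Sum>i=1..n. a i) - (\<Sum>i=1..n. f (a i))
         \<le> (\<Sum>(i,j)\<in>{(i,j). 1 \<le> i \<and> i < j \<and> j \<le> n}. f (a i + a j) - f (a i) - f (a j))"
  using assms(3)
proof (induction n)
  case 0
  have no_pairs: "{(i,j). 1 \<le> i \<and> i < j \<and> j \<le> (0::nat)} = {}"
    by auto
  show ?case unfolding no_pairs using f0 by simp
next
  case (Suc n)
  let ?P = "\<lambda>n. {(i,j). 1 \<le> i \<and> i < j \<and> j \<le> n}"
  let ?d = "\<lambda>(i,j). f (a i + a j) - f (a i) - f (a j)"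
  have split: "?P (Suc n) = ?P n \<union> (\<lambda>i. (i, Suc n)) ` {1..n}"
    and disjoint: "?P n \<inter> (\<lambda>i. (i, Suc n)) ` {1..n} = {}"
    by auto
  have "finite (?P n)"
    by (rule finite_subset[of _ "{1..n} \<times> {1..n}"]) auto
  then have pairs: "sum ?d (?P (Suc n)) = sum ?d (?P n) + (\<Sum>i=1..n. ?d (i, Suc n))"
    unfolding split using disjoint by (simp add: sum.union_disjoint sum.reindex inj_on_def)
  have "f ((\<Sum>i=1..n. a i) + a (Suc n)) - f (\<Sum>i=1..n. a i) - f (a (Suc n))
          \<le> (\<Sum>i=1..n. ?d (i, Suc n))"
    using add_defect_le_sum_defects[OF f0 sum3, of "{1..n}" a "a (Suc n)"] Suc.prems by simp
  moreover have "f (\<Sum>i=1..n. a i) - (\<Sum>i=1..n. f (a i)) \<le> sum ?d (?P n)"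
    using Suc by simp
  ultimately show ?case
    unfolding pairs by simp
qed

theorem lemmaA5:
  fixes p :: real and \<nu> :: nat and a :: "nat \<Rightarrow> real"
  assumes "1 < p" and "p \<le> 2" and "\<nu> \<ge> 2"
    and "\<And>i. i \<in> {1..\<nu>} \<Longrightarrow> a i \<ge> 0"
  shows "(\<Sum>i=1..\<nu>. a i) powr p - (\<Sum>i=1..\<nu>. a i powr p)
         \<le> (\<Sum>(i,j)\<in>{(i,j). 1 \<le> i \<and> i < j \<and> j \<le> \<nu>}.
               (a i + a j) powr p - a i powr p - a j powr p)"
  using sum_defect_le_pair_defects[of "\<lambda>x. x powr p", OF _ powr_sum3_ineq[OF assms(1,2)] assms(4)]
  by simp

end
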